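(* For $\varepsilon\in(0,1/2)$, any quantum query algorithm that, given unitary oracles $U_\varphi,U_\psi$ preparing pure states $\ket{\varphi}=U_\varphi\ket{0}$ and $\ket{\psi}=U_\psi\ket{0}$ (with access to their inverses and controlled versions), estimates the trace distance $\mathrm{T}(\ket{\varphi},\ket{\psi})$ to within additive error $\varepsilon$ with probability at least $2/3$ (for all such inputs) has query complexity $\Omega(1/\varepsilon)$.
   Context: For pure states, $\mathrm{T}(\ket{\varphi},\ket{\psi})=\tfrac12\operatorname{tr}\bigl|\ket{\varphi}\bra{\varphi}-\ket{\psi}\bra{\psi}\bigr|=\sqrt{1-|\braket{\varphi}{\psi}|^2}$. Query complexity is the number of applications of the oracles, their inverses, or controlled versions in the algorithm's circuit. *)

theory Defs
  imports Complex_Main "Jordan_Normal_Form.Matrix"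
begin

definition adj :: "complex mat \<Rightarrow> complex mat" where
  "adj U = mat (dim_col U) (dim_row U) (\<lambda>(i,j). cnj (U $$ (j,i)))"

definition is_unitary :: "nat \<Rightarrow> complex mat \<Rightarrow> bool" where
  "is_unitary n U \<longleftrightarrow> U \<in> carrier_mat n n \<and> adj U * U = 1\<^sub>m n \<and> U * adj U = 1\<^sub>m n"

definition ket0 :: "nat \<Rightarrow> complex vec" where
  "ket0 n = unit_vec n 0"

definition braket :: "complex vec \<Rightarrow> complex vec \<Rightarrow> complex" where
  "braket u v = (\<Sum>i<dim_vec v. cnj (u $ i) * v $ i)"

text \<open>Trace distance of pure states, T = sqrt(1 - |<phi|psi>|^2)
  (equal to (1/2) tr| |phi><phi| - |psi><psi| | for unit vectors).\<close>
definition trace_dist_pure :: "complex vec \<Rightarrow> complex vec \<Rightarrow> real" where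
  "trace_dist_pure u v = sqrt (1 - (cmod (braket u v))\<^sup>2)"

text \<open>Workspace C^(2*N*K) = C^2 (control qubit) \<otimes> C^N (oracle register) \<otimes> C^K (ancilla).
  Index i encodes control c = i div (N*K), system s = (i div K) mod N, ancilla a = i mod K.
  Arbitrary unitaries between queries allow any placement of the oracle register and control,
  and computational-basis measurement followed by classical post-processing realises any POVM.\<close>

datatype query = Query (which_psi: bool) (inverse: bool) (controlled: bool)
  \<comment> \<open>which_psi: False = U_phi, True = U_psi\<close>

definition ctl :: "nat \<Rightarrow> nat \<Rightarrow> nat \<Rightarrow> nat" where "ctl N K i = i div (N*K)"
definition sys :: "nat \<Rightarrow> nat \<Rightarrow> nat \<Rightarrow> nat" where "sys N K i = (i div K) mod N"
definition anc :: "nat \<Rightarrow> nat \<Rightarrow> nat \<Rightarrow> nat" where "anc N K i = i mod K"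

text \<open>I_2 \<otimes> V \<otimes> I_K (uncontrolled) or |0><0| \<otimes> I_N \<otimes> I_K + |1><1| \<otimes> V \<otimes> I_K (controlled).\<close>
definition embed_gate :: "nat \<Rightarrow> nat \<Rightarrow> bool \<Rightarrow> complex mat \<Rightarrow> complex mat" where
  "embed_gate N K c V = mat (2*N*K) (2*N*K) (\<lambda>(i,j).
     if ctl N K i = ctl N K j \<and> anc N K i = anc N K j then
       (if \<not> c \<or> ctl N K i = 1 then V $$ (sys N K i, sys N K j)
        else (if sys N K i = sys N K j then 1 else 0))
     else 0)"

definition query_gate :: "nat \<Rightarrow> nat \<Rightarrow> complex mat \<Rightarrow> complex mat \<Rightarrow> query \<Rightarrow> complex mat" where
  "query_gate N K Uphi Upsi q =
     (let U = (if which_psi q then Upsi else Uphi);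
          V = (if inverse q then adj U else U)
      in embed_gate N K (controlled q) V)"

text \<open>An algorithm: unitaries A_0,...,A_T (list As of length T+1), queries Q_1..Q_T (list Qs),
  ancilla dimension K, classical post-processing f of the measured basis index.
  Final state: A_T O_T ... A_1 O_1 A_0 |0>.\<close>
record qalg =
  anc_dim :: nat
  unitaries :: "complex mat list"
  queries :: "query list"
  postproc :: "nat \<Rightarrow> real"

fun run :: "nat \<Rightarrow> nat \<Rightarrow> complex mat \<Rightarrow> complex mat \<Rightarrow> complex mat list \<Rightarrow> query list \<Rightarrow> complex vec \<Rightarrow> complex vec" where
  "run N K Uphi Upsi (A # As) (q # Qs) v = run N K Uphi Upsi As Qs (query_gate N K Uphi Upsi q *\<^sub>v (A *\<^sub>v v))"
| "run N K Uphi Upsi [A] [] v = A *\<^sub>v v"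
| "run N K Uphi Upsi _ _ v = v"

definition final_state :: "nat \<Rightarrow> qalg \<Rightarrow> complex mat \<Rightarrow> complex mat \<Rightarrow> complex vec" where
  "final_state N alg Uphi Upsi =
     run N (anc_dim alg) Uphi Upsi (unitaries alg) (queries alg) (ket0 (2 * N * anc_dim alg))"

definition well_formed :: "nat \<Rightarrow> qalg \<Rightarrow> bool" where
  "well_formed N alg \<longleftrightarrow> anc_dim alg \<ge> 1 \<and>
     length (unitaries alg) = length (queries alg) + 1 \<and>
     (\<forall>A \<in> set (unitaries alg). is_unitary (2 * N * anc_dim alg) A)"

definition num_queries :: "qalg \<Rightarrow> nat" where
  "num_queries alg = length (queries alg)"

definition prob_output :: "nat \<Rightarrow> qalg \<Rightarrow> complex mat \<Rightarrow> complex mat \<Rightarrow> (real \<Rightarrow> bool) \<Rightarrow> real" where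
  "prob_output N alg Uphi Upsi S =
     (let v = final_state N alg Uphi Upsi in
      \<Sum>j \<in> {j. j < dim_vec v \<and> S (postproc alg j)}. (cmod (v $ j))\<^sup>2)"

definition estimates_trace_distance :: "nat \<Rightarrow> real \<Rightarrow> qalg \<Rightarrow> bool" where
  "estimates_trace_distance N eps alg \<longleftrightarrow>
     (\<forall>Uphi Upsi. is_unitary N Uphi \<longrightarrow> is_unitary N Upsi \<longrightarrow>
        prob_output N alg Uphi Upsi
          (\<lambda>x. \<bar>x - trace_dist_pure (Uphi *\<^sub>v ket0 N) (Upsi *\<^sub>v ket0 N)\<bar> \<le> eps) \<ge> 2/3)"

end

theory Submission
  imports Defs "HOL-Analysis.L2_Norm"
begin

text \<open>Compare the oracle pairs (I, I) and (I, R), where R rotates the plane spanned by |0> and |1>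
  by an angle with sine s, 2 eps < s <= 3 eps. Their trace distances are 0 and s, so no output is
  correct for both, and an estimator that succeeds with probability 2/3 on each must produce final
  states at Euclidean distance more than sqrt(2/3) - sqrt(1/3) > 1/5. On the other hand every query
  gate, inverse and controlled versions included, acts blockwise on the workspace by I, R or adj R,
  so the gates of the two runs differ by at most the operator norm of R - I, which is below 2 s. By
  the hybrid argument the final states differ by at most 2 s T <= 6 eps T after T queries, whence
  T > 1 / (30 eps).\<close>

section \<open>Euclidean norm and measurement probabilities\<close>

definition vec_norm :: "complex vec \<Rightarrow> real" where
  "vec_norm v = L2_set (\<lambda>i. cmod (v $ i)) {..<dim_vec v}"

definition meas_prob :: "complex vec \<Rightarrow> nat set \<Rightarrow> real" where
  "meas_prob v J = (\<Sum>j\<in>J. (cmod (v $ j))\<^sup>2)"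

lemma vec_norm_nonneg: "vec_norm v \<ge> 0"
  unfolding vec_norm_def by (rule L2_set_nonneg)

lemma vec_norm_square: "(vec_norm v)\<^sup>2 = (\<Sum>i<dim_vec v. (cmod (v $ i))\<^sup>2)"
  unfolding vec_norm_def L2_set_def by (simp add: sum_nonneg)

lemma vec_norm_triangle:
  assumes "x \<in> carrier_vec n" "y \<in> carrier_vec n" "z \<in> carrier_vec n"
  shows "vec_norm (x - z) \<le> vec_norm (x - y) + vec_norm (y - z)"
proof -
  have "vec_norm (x - z) = L2_set (\<lambda>i. cmod (x $ i - z $ i)) {..<n}"
    using assms unfolding vec_norm_def by (auto intro!: L2_set_cong)
  also have "\<dots> \<le> L2_set (\<lambda>i. cmod (x $ i - y $ i) + cmod (y $ i - z $ i)) {..<n}"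
    by (rule L2_set_mono) (use norm_triangle_ineq[of "x $ i - y $ i" "y $ i - z $ i" for i] in auto)
  also have "\<dots> \<le> L2_set (\<lambda>i. cmod (x $ i - y $ i)) {..<n}
      + L2_set (\<lambda>i. cmod (y $ i - z $ i)) {..<n}"
    by (rule L2_set_triangle_ineq)
  also have "\<dots> = vec_norm (x - y) + vec_norm (y - z)"
    using assms unfolding vec_norm_def by (auto intro!: L2_set_cong arg_cong2[where f = "(+)"])
  finally show ?thesis .
qed

lemma vec_norm_minus_commute:
  assumes "x \<in> carrier_vec n" "y \<in> carrier_vec n"
  shows "vec_norm (x - y) = vec_norm (y - x)"
  using assms unfolding vec_norm_def by (auto intro!: L2_set_cong simp: norm_minus_commute)

lemma vec_norm_diff_self: "vec_norm (v - v) = 0"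
  unfolding vec_norm_def L2_set_def by simp

lemma vec_norm_unit_vec:
  assumes "i < n" shows "vec_norm (unit_vec n i) = 1"
proof -
  have "(\<Sum>j<n. (cmod (unit_vec n i $ j))\<^sup>2) = (\<Sum>j<n. if j = i then 1 else 0)"
    by (intro sum.cong refl) (auto simp: unit_vec_def)
  then show ?thesis
    unfolding vec_norm_def L2_set_def using assms by simp
qed

lemma sqrt_meas_prob_le:
  assumes "dim_vec w = dim_vec v" and J: "J \<subseteq> {..<dim_vec v}"
  shows "sqrt (meas_prob v J) \<le> sqrt (meas_prob w J) + vec_norm (v - w)"
proof -
  have "sqrt (meas_prob v J) = L2_set (\<lambda>j. cmod (v $ j)) J"
    by (simp add: meas_prob_def L2_set_def)
  also have "\<dots> \<le> L2_set (\<lambda>j. cmod (w $ j) + cmod ((v - w) $ j)) J"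
  proof (rule L2_set_mono)
    fix j assume "j \<in> J"
    then show "cmod (v $ j) \<le> cmod (w $ j) + cmod ((v - w) $ j)"
      using J assms(1) norm_triangle_ineq[of "w $ j" "v $ j - w $ j"] by auto
  qed simp
  also have "\<dots> \<le> L2_set (\<lambda>j. cmod (w $ j)) J + L2_set (\<lambda>j. cmod ((v - w) $ j)) J"
    by (rule L2_set_triangle_ineq)
  also have "L2_set (\<lambda>j. cmod ((v - w) $ j)) J \<le> vec_norm (v - w)"
    unfolding vec_norm_def L2_set_def using J assms(1)
    by (intro real_sqrt_le_mono sum_mono2) auto
  finally show ?thesis by (simp add: meas_prob_def L2_set_def)
qed

lemma meas_prob_disjoint_le:
  assumes "J1 \<subseteq> {..<dim_vec w}" "J2 \<subseteq> {..<dim_vec w}" "J1 \<inter> J2 = {}"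
  shows "meas_prob w J1 + meas_prob w J2 \<le> (vec_norm w)\<^sup>2"
proof -
  have "finite J1" "finite J2" using assms(1,2) finite_subset by auto
  then have "meas_prob w J1 + meas_prob w J2 = (\<Sum>j\<in>J1 \<union> J2. (cmod (w $ j))\<^sup>2)"
    using assms(3) by (simp add: meas_prob_def sum.union_disjoint)
  also have "\<dots> \<le> (vec_norm w)\<^sup>2"
    unfolding vec_norm_square using assms(1,2) by (intro sum_mono2) auto
  finally show ?thesis .
qed

lemma separated_outputs_far:
  assumes "dim_vec w = dim_vec v" "J \<subseteq> {..<dim_vec v}"
    and "meas_prob v J \<ge> 2/3" "meas_prob w J \<le> 1/3"
  shows "1/5 < vec_norm (v - w)"
proof -
  have "4/5 < sqrt (2/3 :: real)" by (rule real_less_rsqrt) (simp add: power2_eq_square)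
  also have "\<dots> \<le> sqrt (meas_prob v J)" using assms(3) by simp
  also have "\<dots> \<le> sqrt (meas_prob w J) + vec_norm (v - w)" by (rule sqrt_meas_prob_le[OF assms(1,2)])
  also have "sqrt (meas_prob w J) \<le> 3/5"
    using assms(4) by (intro real_le_lsqrt) (auto simp: power2_eq_square meas_prob_def sum_nonneg)
  finally show ?thesis by simp
qed

section \<open>Unitary matrices\<close>

lemma sum_cnj_mult_eq_vec_norm_square:
  "(\<Sum>i<dim_vec v. cnj (v $ i) * v $ i) = complex_of_real ((vec_norm v)\<^sup>2)"
  unfolding vec_norm_square of_real_sum
  by (intro sum.cong refl) (metis complex_norm_square mult.commute of_real_power)

lemma adj_carrier: "U \<in> carrier_mat n m \<Longrightarrow> adj U \<in> carrier_mat m n"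
  unfolding adj_def by simp

lemma adj_adj: "U \<in> carrier_mat n m \<Longrightarrow> adj (adj U) = U"
  unfolding adj_def by (rule eq_matI) auto

lemma adj_one: "adj (1\<^sub>m n) = 1\<^sub>m n"
  unfolding adj_def by (rule eq_matI) auto

lemma is_unitary_one: "is_unitary n (1\<^sub>m n)"
  unfolding is_unitary_def adj_one by simp

lemma is_unitary_adj: "is_unitary n U \<Longrightarrow> is_unitary n (adj U)"
  unfolding is_unitary_def by (auto simp: adj_adj adj_carrier)

lemma unitary_vec_norm:
  assumes U: "is_unitary n U" and v: "v \<in> carrier_vec n"
  shows "vec_norm (U *\<^sub>v v) = vec_norm v"
proof -
  have Uc: "U \<in> carrier_mat n n" and UU: "adj U * U = 1\<^sub>m n" using U unfolding is_unitary_def by auto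
  have col: "(\<Sum>i<n. cnj (U $$ (i,k)) * U $$ (i,l)) = (if k = l then 1 else 0)"
    if "k < n" "l < n" for k l
  proof -
    have "(adj U * U) $$ (k,l) = (\<Sum>i<n. cnj (U $$ (i,k)) * U $$ (i,l))"
      using Uc that by (simp add: adj_def scalar_prod_def lessThan_atLeast0)
    then show ?thesis using UU that by simp
  qed
  have "complex_of_real ((vec_norm (U *\<^sub>v v))\<^sup>2) = (\<Sum>i<n. cnj ((U *\<^sub>v v) $ i) * (U *\<^sub>v v) $ i)"
    using sum_cnj_mult_eq_vec_norm_square[of "U *\<^sub>v v"] Uc by (metis carrier_matD(1) dim_mult_mat_vec)
  also have "\<dots> = (\<Sum>i<n. (\<Sum>k<n. cnj (U $$ (i,k)) * cnj (v $ k)) * (\<Sum>l<n. U $$ (i,l) * v $ l))"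
    using Uc v by (simp add: scalar_prod_def lessThan_atLeast0)
  also have "\<dots> = (\<Sum>i<n. \<Sum>k<n. \<Sum>l<n. cnj (v $ k) * v $ l * (cnj (U $$ (i,k)) * U $$ (i,l)))"
    unfolding sum_product by (intro sum.cong refl) (simp add: algebra_simps)
  also have "\<dots> = (\<Sum>k<n. \<Sum>l<n. \<Sum>i<n. cnj (v $ k) * v $ l * (cnj (U $$ (i,k)) * U $$ (i,l)))"
    by (subst sum.swap, rule sum.cong[OF refl], rule sum.swap)
  also have "\<dots> = (\<Sum>k<n. \<Sum>l<n. cnj (v $ k) * v $ l * (if k = l then 1 else 0))"
    by (intro sum.cong refl) (simp add: sum_distrib_left[symmetric] col)
  also have "\<dots> = (\<Sum>k<n. cnj (v $ k) * v $ k)"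
    by (simp add: if_distrib sum.delta cong: if_cong)
  also have "\<dots> = complex_of_real ((vec_norm v)\<^sup>2)"
    using sum_cnj_mult_eq_vec_norm_square[of v] v by (metis carrier_vecD)
  finally have "complex_of_real ((vec_norm (U *\<^sub>v v))\<^sup>2) = complex_of_real ((vec_norm v)\<^sup>2)" .
  then have "(vec_norm (U *\<^sub>v v))\<^sup>2 = (vec_norm v)\<^sup>2"
    by (simp only: of_real_eq_iff)
  then show ?thesis by (simp add: vec_norm_nonneg power2_eq_iff_nonneg)
qed

definition op_dist_le :: "nat \<Rightarrow> complex mat \<Rightarrow> complex mat \<Rightarrow> real \<Rightarrow> bool" where
  "op_dist_le n V W \<delta> \<longleftrightarrow>
     (\<forall>u\<in>carrier_vec n. vec_norm (V *\<^sub>v u - W *\<^sub>v u) \<le> \<delta> * vec_norm u)"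

lemma op_dist_le_refl: "\<delta> \<ge> 0 \<Longrightarrow> op_dist_le n V V \<delta>"
  unfolding op_dist_le_def by (simp add: vec_norm_diff_self vec_norm_nonneg)

lemma unitary_adj_dist:
  assumes V: "is_unitary n V" and W: "is_unitary n W" and close: "op_dist_le n V W \<delta>"
  shows "op_dist_le n (adj V) (adj W) \<delta>"
  unfolding op_dist_le_def
proof
  fix u :: "complex vec" assume u: "u \<in> carrier_vec n"
  have Vc: "V \<in> carrier_mat n n" "adj V \<in> carrier_mat n n" "adj V * V = 1\<^sub>m n"
    and Wc: "W \<in> carrier_mat n n" "adj W \<in> carrier_mat n n" "W * adj W = 1\<^sub>m n"
    using V W unfolding is_unitary_def by (auto simp: adj_carrier)
  define x where "x = adj W *\<^sub>v u"
  have x: "x \<in> carrier_vec n" unfolding x_def using Wc u by simp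
  have "W *\<^sub>v x = u"
    unfolding x_def using Wc u by (simp flip: assoc_mult_mat_vec)
  moreover have "adj V *\<^sub>v (V *\<^sub>v x) = adj W *\<^sub>v u"
    using Vc x by (simp flip: assoc_mult_mat_vec add: x_def)
  moreover have "adj V *\<^sub>v (W *\<^sub>v x - V *\<^sub>v x) = adj V *\<^sub>v (W *\<^sub>v x) - adj V *\<^sub>v (V *\<^sub>v x)"
    using Vc Wc x by (intro mult_minus_distrib_mat_vec) auto
  ultimately have "adj V *\<^sub>v u - adj W *\<^sub>v u = adj V *\<^sub>v (W *\<^sub>v x - V *\<^sub>v x)"
    by simp
  then have "vec_norm (adj V *\<^sub>v u - adj W *\<^sub>v u) = vec_norm (V *\<^sub>v x - W *\<^sub>v x)"
    using unitary_vec_norm[OF is_unitary_adj[OF V]] vec_norm_minus_commute[of "W *\<^sub>v x" n "V *\<^sub>v x"]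
      Vc Wc x
    by simp
  also have "\<dots> \<le> \<delta> * vec_norm x" using close x unfolding op_dist_le_def by blast
  also have "vec_norm x = vec_norm u"
    unfolding x_def by (rule unitary_vec_norm[OF is_unitary_adj[OF W] u])
  finally show "vec_norm (adj V *\<^sub>v u - adj W *\<^sub>v u) \<le> \<delta> * vec_norm u" .
qed

section \<open>Block structure of the workspace\<close>

definition reg_index :: "nat \<Rightarrow> nat \<Rightarrow> nat \<Rightarrow> nat \<Rightarrow> nat \<Rightarrow> nat" where
  "reg_index N K c s a = c * (N * K) + s * K + a"

lemma mult_add_less_mult:
  fixes s a N K :: nat
  assumes "s < N" "a < K"
  shows "s * K + a < N * K"
proof -
  have "s * K + a < Suc s * K" using assms(2) by simp
  also have "\<dots> \<le> N * K" using assms(1) by (intro mult_le_mono1) simp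
  finally show ?thesis .
qed

lemma reg_index_less:
  assumes "c < 2" "s < N" "a < K"
  shows "reg_index N K c s a < 2 * N * K"
proof -
  have "reg_index N K c s a = c * (N * K) + (s * K + a)" by (simp add: reg_index_def)
  also have "\<dots> < Suc c * (N * K)" using mult_add_less_mult[OF assms(2,3)] by simp
  also have "\<dots> \<le> 2 * N * K" using assms(1) by (simp add: mult.assoc mult_le_mono1)
  finally show ?thesis .
qed

lemma reg_index_components:
  assumes "s < N" "a < K"
  shows "ctl N K (reg_index N K c s a) = c" "sys N K (reg_index N K c s a) = s"
    "anc N K (reg_index N K c s a) = a"
proof -
  have eq: "reg_index N K c s a = a + (s + c * N) * K" by (simp add: reg_index_def algebra_simps)
  show "anc N K (reg_index N K c s a) = a" unfolding anc_def eq using assms by simp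
  have "reg_index N K c s a div K = s + c * N" unfolding eq using assms by simp
  then show "sys N K (reg_index N K c s a) = s" and "ctl N K (reg_index N K c s a) = c"
    unfolding sys_def ctl_def using assms by (simp_all add: div_mult2_eq mult.commute)
qed

lemma reg_index_of_components:
  assumes "i < 2 * N * K"
  shows "ctl N K i < 2" "sys N K i < N" "anc N K i < K"
    "reg_index N K (ctl N K i) (sys N K i) (anc N K i) = i"
proof -
  have "N > 0" "K > 0" using assms by (auto intro!: Nat.gr0I)
  then show "sys N K i < N" "anc N K i < K" unfolding sys_def anc_def by simp_all
  show "ctl N K i < 2" unfolding ctl_def using assms by (simp add: less_mult_imp_div_less mult.assoc)
  have "i div K = i div (N * K) * N + i div K mod N"
    by (simp add: div_mult2_eq mult.commute)
  then have "i div K * K = i div (N * K) * (N * K) + i div K mod N * K"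
    by (metis add_mult_distrib mult.assoc)
  then show "reg_index N K (ctl N K i) (sys N K i) (anc N K i) = i"
    unfolding reg_index_def ctl_def sys_def anc_def by (metis div_mult_mod_eq)
qed

lemma reg_index_bij:
  "bij_betw (\<lambda>(c, s, a). reg_index N K c s a) ({..<2} \<times> {..<N} \<times> {..<K}) {..<2 * N * K}"
  by (rule bij_betw_byWitness[where f' = "\<lambda>i. (ctl N K i, sys N K i, anc N K i)"])
    (auto simp: reg_index_components reg_index_less reg_index_of_components)

lemma sum_reg_index:
  "(\<Sum>i<2 * N * K. g i) = (\<Sum>c<2. \<Sum>s<N. \<Sum>a<K. g (reg_index N K c s a))"
  by (simp add: sum.reindex_bij_betw[OF reg_index_bij, symmetric] sum.cartesian_product prod.case_distrib)

definition sys_block :: "nat \<Rightarrow> nat \<Rightarrow> complex vec \<Rightarrow> nat \<Rightarrow> nat \<Rightarrow> complex vec" where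
  "sys_block N K z c a = vec N (\<lambda>s. z $ reg_index N K c s a)"

lemma sys_block_carrier: "sys_block N K z c a \<in> carrier_vec N"
  unfolding sys_block_def by simp

lemma sys_block_minus:
  assumes "x \<in> carrier_vec (2 * N * K)" "y \<in> carrier_vec (2 * N * K)" "c < 2" "a < K"
  shows "sys_block N K (x - y) c a = sys_block N K x c a - sys_block N K y c a"
  by (rule eq_vecI) (use assms in \<open>auto simp: sys_block_def reg_index_less\<close>)

lemma vec_norm_square_sys_blocks:
  assumes "z \<in> carrier_vec (2 * N * K)"
  shows "(vec_norm z)\<^sup>2 = (\<Sum>c<2. \<Sum>a<K. (vec_norm (sys_block N K z c a))\<^sup>2)"
  using assms unfolding vec_norm_square
  by (simp add: sum_reg_index sum.swap[of _ "{..<N}"] sys_block_def)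

lemma sum_delta_ctl_anc:
  fixes c a K N :: nat and h :: "nat \<Rightarrow> 'a :: comm_monoid_add"
  assumes "c < 2" "a < K"
  shows "(\<Sum>c'<2. \<Sum>s'<N. \<Sum>a'<K. if c' = c then (if a' = a then h s' else 0) else 0) = (\<Sum>s'<N. h s')"
proof -
  have "(\<Sum>s'<N. \<Sum>a'<K. if c' = c then (if a' = a then h s' else 0) else 0)
      = (if c' = c then (\<Sum>s'<N. h s') else 0)" for c'
    using assms(2) by (cases "c' = c") (simp_all add: sum.delta')
  then show ?thesis using assms(1) by (simp add: sum.delta')
qed

lemma embed_gate_carrier: "embed_gate N K b V \<in> carrier_mat (2 * N * K) (2 * N * K)"
  unfolding embed_gate_def by simp

lemma sys_block_embed_gate:
  assumes V: "V \<in> carrier_mat N N" and z: "z \<in> carrier_vec (2 * N * K)" and c: "c < 2" and a: "a < K"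
  shows "sys_block N K (embed_gate N K b V *\<^sub>v z) c a =
    (if \<not> b \<or> c = 1 then V *\<^sub>v sys_block N K z c a else sys_block N K z c a)"
proof (rule eq_vecI)
  fix s assume "s < dim_vec (if \<not> b \<or> c = 1 then V *\<^sub>v sys_block N K z c a else sys_block N K z c a)"
  then have s: "s < N" using V by (cases "\<not> b \<or> c = 1") (simp_all add: sys_block_def)
  define i where "i = reg_index N K c s a"
  define h where "h s' = (if \<not> b \<or> c = 1 then V $$ (s, s') * z $ reg_index N K c s' a
    else if s = s' then z $ reg_index N K c s' a else 0)" for s'
  have i: "i < 2 * N * K" unfolding i_def using c s a by (rule reg_index_less)
  have "sys_block N K (embed_gate N K b V *\<^sub>v z) c a $ s = (embed_gate N K b V *\<^sub>v z) $ i"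
    using s unfolding sys_block_def i_def by simp
  also have "\<dots> = (\<Sum>j<2 * N * K. embed_gate N K b V $$ (i, j) * z $ j)"
    using z i by (simp add: embed_gate_def scalar_prod_def lessThan_atLeast0)
  also have "\<dots> = (\<Sum>c'<2. \<Sum>s'<N. \<Sum>a'<K.
      embed_gate N K b V $$ (i, reg_index N K c' s' a') * z $ reg_index N K c' s' a')"
    by (rule sum_reg_index)
  also have "\<dots> = (\<Sum>c'<2. \<Sum>s'<N. \<Sum>a'<K. if c' = c then (if a' = a then h s' else 0) else 0)"
    using i s a unfolding i_def
    by (intro sum.cong refl) (auto simp: embed_gate_def h_def reg_index_less reg_index_components)
  also have "\<dots> = (\<Sum>s'<N. h s')"
    using c a by (rule sum_delta_ctl_anc)
  also have "\<dots> = (if \<not> b \<or> c = 1 then V *\<^sub>v sys_block N K z c a else sys_block N K z c a) $ s"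
  proof (cases "\<not> b \<or> c = 1")
    case True
    then show ?thesis using V s by (simp add: h_def sys_block_def scalar_prod_def lessThan_atLeast0)
  next
    case False
    then show ?thesis using s by (simp add: h_def sys_block_def sum.delta)
  qed
  finally show "sys_block N K (embed_gate N K b V *\<^sub>v z) c a $ s = \<dots>" .
next
  show "dim_vec (sys_block N K (embed_gate N K b V *\<^sub>v z) c a) =
      dim_vec (if \<not> b \<or> c = 1 then V *\<^sub>v sys_block N K z c a else sys_block N K z c a)"
    by (cases "\<not> b \<or> c = 1") (use V in \<open>simp_all add: sys_block_def\<close>)
qed

lemma embed_gate_vec_norm:
  assumes V: "V \<in> carrier_mat N N"
    and isometry: "\<And>u. u \<in> carrier_vec N \<Longrightarrow> vec_norm (V *\<^sub>v u) = vec_norm u"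
    and z: "z \<in> carrier_vec (2 * N * K)"
  shows "vec_norm (embed_gate N K b V *\<^sub>v z) = vec_norm z"
proof -
  have Vz: "embed_gate N K b V *\<^sub>v z \<in> carrier_vec (2 * N * K)"
    using embed_gate_carrier z by (rule mult_mat_vec_carrier)
  have "(vec_norm (embed_gate N K b V *\<^sub>v z))\<^sup>2 = (vec_norm z)\<^sup>2"
    unfolding vec_norm_square_sys_blocks[OF z] vec_norm_square_sys_blocks[OF Vz]
    by (intro sum.cong refl) (simp add: sys_block_embed_gate V z isometry sys_block_carrier)
  then show ?thesis by (simp add: vec_norm_nonneg power2_eq_iff_nonneg)
qed

lemma embed_gate_dist:
  assumes V: "V \<in> carrier_mat N N" and W: "W \<in> carrier_mat N N"
    and close: "op_dist_le N V W \<delta>" and \<delta>: "\<delta> \<ge> 0"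
  shows "op_dist_le (2 * N * K) (embed_gate N K b V) (embed_gate N K b W) \<delta>"
  unfolding op_dist_le_def
proof
  fix z :: "complex vec" assume z: "z \<in> carrier_vec (2 * N * K)"
  let ?d = "embed_gate N K b V *\<^sub>v z - embed_gate N K b W *\<^sub>v z"
  have Vz: "embed_gate N K b V *\<^sub>v z \<in> carrier_vec (2 * N * K)"
    and Wz: "embed_gate N K b W *\<^sub>v z \<in> carrier_vec (2 * N * K)"
    using embed_gate_carrier z by (rule mult_mat_vec_carrier)+
  then have d: "?d \<in> carrier_vec (2 * N * K)" by simp
  have block: "(vec_norm (sys_block N K ?d c a))\<^sup>2 \<le> \<delta>\<^sup>2 * (vec_norm (sys_block N K z c a))\<^sup>2"
    if "c < 2" "a < K" for c a
  proof -
    have "sys_block N K ?d c a = (if \<not> b \<or> c = 1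
        then V *\<^sub>v sys_block N K z c a - W *\<^sub>v sys_block N K z c a
        else sys_block N K z c a - sys_block N K z c a)"
      using that V W z by (simp add: sys_block_minus[OF Vz Wz] sys_block_embed_gate)
    moreover have "(vec_norm (V *\<^sub>v sys_block N K z c a - W *\<^sub>v sys_block N K z c a))\<^sup>2
        \<le> (\<delta> * vec_norm (sys_block N K z c a))\<^sup>2"
      using close sys_block_carrier unfolding op_dist_le_def by (intro power_mono) (auto simp: vec_norm_nonneg)
    ultimately show ?thesis by (simp add: vec_norm_diff_self power_mult_distrib)
  qed
  have "(vec_norm ?d)\<^sup>2 \<le> (\<delta> * vec_norm z)\<^sup>2"
    unfolding vec_norm_square_sys_blocks[OF d] vec_norm_square_sys_blocks[OF z]
      power_mult_distrib sum_distrib_left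
    by (intro sum_mono) (simp add: block)
  then show "vec_norm ?d \<le> \<delta> * vec_norm z" by (rule power2_le_imp_le) (simp add: \<delta> vec_norm_nonneg)
qed

section \<open>Query gates and the hybrid argument\<close>

lemma query_gate_eq_embed_gate:
  "query_gate N K P Q q = embed_gate N K (controlled q)
     (if inverse q then adj (if which_psi q then Q else P) else if which_psi q then Q else P)"
  unfolding query_gate_def Let_def ..

lemma query_gate_carrier: "query_gate N K P Q q \<in> carrier_mat (2 * N * K) (2 * N * K)"
  unfolding query_gate_eq_embed_gate by (rule embed_gate_carrier)

lemma query_gate_vec_norm:
  assumes "is_unitary N P" "is_unitary N Q" and z: "z \<in> carrier_vec (2 * N * K)"
  shows "vec_norm (query_gate N K P Q q *\<^sub>v z) = vec_norm z"
proof -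
  define V where "V = (if inverse q then adj (if which_psi q then Q else P) else if which_psi q then Q else P)"
  have V: "is_unitary N V" using assms(1,2) unfolding V_def by (simp add: is_unitary_adj)
  show ?thesis unfolding query_gate_eq_embed_gate V_def[symmetric]
  proof (rule embed_gate_vec_norm[OF _ _ z])
    show "V \<in> carrier_mat N N" using V by (simp add: is_unitary_def)
  qed (rule unitary_vec_norm[OF V])
qed

lemma query_gate_dist:
  assumes P: "is_unitary N P" "is_unitary N P'" and Q: "is_unitary N Q" "is_unitary N Q'"
    and P_close: "op_dist_le N P P' \<delta>" and Q_close: "op_dist_le N Q Q' \<delta>" and \<delta>: "\<delta> \<ge> 0"
  shows "op_dist_le (2 * N * K) (query_gate N K P Q q) (query_gate N K P' Q' q) \<delta>"
proof -
  define U where "U = (if which_psi q then Q else P)"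
  define U' where "U' = (if which_psi q then Q' else P')"
  have U: "is_unitary N U" "is_unitary N U'" using P Q by (simp_all add: U_def U'_def)
  have U_close: "op_dist_le N U U' \<delta>" using P_close Q_close by (simp add: U_def U'_def)
  define V where "V = (if inverse q then adj U else U)"
  define V' where "V' = (if inverse q then adj U' else U')"
  have "is_unitary N V" "is_unitary N V'" using U by (simp_all add: V_def V'_def is_unitary_adj)
  then have V: "V \<in> carrier_mat N N" "V' \<in> carrier_mat N N" by (simp_all add: is_unitary_def)
  have V_close: "op_dist_le N V V' \<delta>"
    using unitary_adj_dist[OF U U_close] U_close by (simp add: V_def V'_def)
  have "query_gate N K P Q q = embed_gate N K (controlled q) V"
    "query_gate N K P' Q' q = embed_gate N K (controlled q) V'"
    unfolding query_gate_eq_embed_gate V_def V'_def U_def U'_def by simp_all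
  then show ?thesis using embed_gate_dist[OF V V_close \<delta>] by simp
qed

lemma run_carrier:
  assumes "\<forall>A\<in>set As. A \<in> carrier_mat (2 * N * K) (2 * N * K)" "length As = length Qs + 1"
    and "v \<in> carrier_vec (2 * N * K)"
  shows "run N K P Q As Qs v \<in> carrier_vec (2 * N * K)"
  using assms
proof (induction Qs arbitrary: As v)
  case Nil
  then obtain A where "As = [A]" by (cases As) auto
  then show ?case using Nil.prems by auto
next
  case (Cons q Qs)
  then obtain A As' where As: "As = A # As'" by (cases As) auto
  have "query_gate N K P Q q *\<^sub>v (A *\<^sub>v v) \<in> carrier_vec (2 * N * K)"
    using Cons.prems As query_gate_carrier by (metis list.set_intros(1) mult_mat_vec_carrier)
  then show ?case using Cons.IH[of As'] Cons.prems As by simp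
qed

lemma query_step_dist:
  assumes P: "is_unitary N P" "is_unitary N P'" and Q: "is_unitary N Q" "is_unitary N Q'"
    and P_close: "op_dist_le N P P' \<delta>" and Q_close: "op_dist_le N Q Q' \<delta>" and \<delta>: "\<delta> \<ge> 0"
    and A: "is_unitary (2 * N * K) A"
    and v: "v \<in> carrier_vec (2 * N * K)" and u: "u \<in> carrier_vec (2 * N * K)"
  shows "vec_norm (query_gate N K P Q q *\<^sub>v (A *\<^sub>v v) - query_gate N K P' Q' q *\<^sub>v (A *\<^sub>v u))
    \<le> vec_norm (v - u) + \<delta> * vec_norm u"
proof -
  define G where "G = query_gate N K P Q q"
  define G' where "G' = query_gate N K P' Q' q"
  have Ac: "A \<in> carrier_mat (2 * N * K) (2 * N * K)" using A by (simp add: is_unitary_def)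
  have G: "G \<in> carrier_mat (2 * N * K) (2 * N * K)" "G' \<in> carrier_mat (2 * N * K) (2 * N * K)"
    unfolding G_def G'_def by (rule query_gate_carrier)+
  have Av: "A *\<^sub>v v \<in> carrier_vec (2 * N * K)" and Au: "A *\<^sub>v u \<in> carrier_vec (2 * N * K)"
    using Ac v u by auto
  have "vec_norm (G *\<^sub>v (A *\<^sub>v v) - G' *\<^sub>v (A *\<^sub>v u))
      \<le> vec_norm (G *\<^sub>v (A *\<^sub>v v) - G *\<^sub>v (A *\<^sub>v u))
        + vec_norm (G *\<^sub>v (A *\<^sub>v u) - G' *\<^sub>v (A *\<^sub>v u))"
    using G Av Au by (intro vec_norm_triangle[where n = "2 * N * K"]) auto
  also have "G *\<^sub>v (A *\<^sub>v v) - G *\<^sub>v (A *\<^sub>v u) = G *\<^sub>v (A *\<^sub>v (v - u))"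
    using G Ac v u by (simp add: mult_minus_distrib_mat_vec)
  also have "vec_norm (G *\<^sub>v (A *\<^sub>v (v - u))) = vec_norm (v - u)"
    unfolding G_def using Ac v u
    by (simp add: query_gate_vec_norm[OF P(1) Q(1)] unitary_vec_norm[OF A])
  also have "vec_norm (G *\<^sub>v (A *\<^sub>v u) - G' *\<^sub>v (A *\<^sub>v u)) \<le> \<delta> * vec_norm (A *\<^sub>v u)"
    using query_gate_dist[OF P Q P_close Q_close \<delta>] Au unfolding G_def G'_def op_dist_le_def by blast
  finally show ?thesis unfolding G_def G'_def using unitary_vec_norm[OF A u] by simp
qed

lemma run_hybrid_dist:
  assumes P: "is_unitary N P" "is_unitary N P'" and Q: "is_unitary N Q" "is_unitary N Q'"
    and P_close: "op_dist_le N P P' \<delta>" and Q_close: "op_dist_le N Q Q' \<delta>" and \<delta>: "\<delta> \<ge> 0"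
  shows "\<forall>A\<in>set As. is_unitary (2 * N * K) A \<Longrightarrow> length As = length Qs + 1 \<Longrightarrow>
    v \<in> carrier_vec (2 * N * K) \<Longrightarrow> u \<in> carrier_vec (2 * N * K) \<Longrightarrow>
    vec_norm (run N K P Q As Qs v - run N K P' Q' As Qs u)
      \<le> vec_norm (v - u) + \<delta> * length Qs * vec_norm u"
proof (induction Qs arbitrary: As v u)
  case Nil
  then obtain A where As: "As = [A]" and A: "is_unitary (2 * N * K) A" by (cases As) auto
  then have "A *\<^sub>v v - A *\<^sub>v u = A *\<^sub>v (v - u)"
    using Nil.prems by (metis is_unitary_def mult_minus_distrib_mat_vec)
  then show ?case using As unitary_vec_norm[OF A] Nil.prems by simp
next
  case (Cons q Qs)
  then obtain A As' where As: "As = A # As'" and A: "is_unitary (2 * N * K) A"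
    and As': "\<forall>A\<in>set As'. is_unitary (2 * N * K) A" "length As' = length Qs + 1"
    by (cases As) auto
  define v' where "v' = query_gate N K P Q q *\<^sub>v (A *\<^sub>v v)"
  define u' where "u' = query_gate N K P' Q' q *\<^sub>v (A *\<^sub>v u)"
  have Au: "A *\<^sub>v u \<in> carrier_vec (2 * N * K)" and Av: "A *\<^sub>v v \<in> carrier_vec (2 * N * K)"
    using A Cons.prems(3,4) unfolding is_unitary_def by (metis mult_mat_vec_carrier)+
  have v': "v' \<in> carrier_vec (2 * N * K)"
    unfolding v'_def using query_gate_carrier Av by (rule mult_mat_vec_carrier)
  have u': "u' \<in> carrier_vec (2 * N * K)"
    unfolding u'_def using query_gate_carrier Au by (rule mult_mat_vec_carrier)
  have u'_norm: "vec_norm u' = vec_norm u"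
    unfolding u'_def using A Cons.prems(4) Au by (simp add: query_gate_vec_norm[OF P(2) Q(2)] unitary_vec_norm)
  have "vec_norm (run N K P Q As' Qs v' - run N K P' Q' As' Qs u')
      \<le> vec_norm (v' - u') + \<delta> * length Qs * vec_norm u'"
    using v' u' by (intro Cons.IH As')
  also have "vec_norm (v' - u') \<le> vec_norm (v - u) + \<delta> * vec_norm u"
    unfolding v'_def u'_def using A Cons.prems(3,4)
    by (rule query_step_dist[OF P Q P_close Q_close \<delta>])
  finally show ?case unfolding As u'_norm by (simp add: v'_def u'_def algebra_simps)
qed

lemma run_vec_norm:
  assumes P: "is_unitary N P" and Q: "is_unitary N Q"
  shows "\<forall>A\<in>set As. is_unitary (2 * N * K) A \<Longrightarrow> length As = length Qs + 1 \<Longrightarrow>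
    v \<in> carrier_vec (2 * N * K) \<Longrightarrow> vec_norm (run N K P Q As Qs v) = vec_norm v"
proof (induction Qs arbitrary: As v)
  case Nil
  then obtain A where "As = [A]" "is_unitary (2 * N * K) A" by (cases As) auto
  then show ?case using Nil.prems by (simp add: unitary_vec_norm)
next
  case (Cons q Qs)
  then obtain A As' where As: "As = A # As'" and A: "is_unitary (2 * N * K) A"
    and As': "\<forall>A\<in>set As'. is_unitary (2 * N * K) A" "length As' = length Qs + 1"
    by (cases As) auto
  have Av: "A *\<^sub>v v \<in> carrier_vec (2 * N * K)"
    using A Cons.prems(3) unfolding is_unitary_def by (metis mult_mat_vec_carrier)
  then have "query_gate N K P Q q *\<^sub>v (A *\<^sub>v v) \<in> carrier_vec (2 * N * K)"
    using query_gate_carrier by (rule mult_mat_vec_carrier[rotated])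
  then show ?case
    using As As' Cons.IH Cons.prems Av
    by (simp add: query_gate_vec_norm[OF P Q] unitary_vec_norm[OF A])
qed

lemma final_state_carrier_norm:
  assumes "well_formed N alg" "is_unitary N P" "is_unitary N Q" and N: "N \<ge> 1"
  shows "final_state N alg P Q \<in> carrier_vec (2 * N * anc_dim alg)"
    and "vec_norm (final_state N alg P Q) = 1"
proof -
  have K: "anc_dim alg \<ge> 1" and len: "length (unitaries alg) = length (queries alg) + 1"
    and As: "\<forall>A\<in>set (unitaries alg). is_unitary (2 * N * anc_dim alg) A"
    using assms(1) unfolding well_formed_def by auto
  have ket0: "ket0 (2 * N * anc_dim alg) \<in> carrier_vec (2 * N * anc_dim alg)"
    unfolding ket0_def by simp
  show "final_state N alg P Q \<in> carrier_vec (2 * N * anc_dim alg)"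
    unfolding final_state_def using As len ket0 by (intro run_carrier) (auto simp: is_unitary_def)
  have "vec_norm (ket0 (2 * N * anc_dim alg)) = 1"
    unfolding ket0_def using K N by (intro vec_norm_unit_vec) simp
  then show "vec_norm (final_state N alg P Q) = 1"
    unfolding final_state_def using run_vec_norm[OF assms(2,3) As len ket0] by simp
qed

lemma prob_output_eq_meas_prob:
  "prob_output N alg P Q S = meas_prob (final_state N alg P Q)
     {j. j < dim_vec (final_state N alg P Q) \<and> S (postproc alg j)}"
  unfolding prob_output_def meas_prob_def Let_def ..

lemma estimator_separates_final_states:
  assumes N: "N \<ge> 1" and wf: "well_formed N alg" and est: "estimates_trace_distance N eps alg"
    and unitary: "is_unitary N P" "is_unitary N Q" "is_unitary N P'" "is_unitary N Q'"
    and gap: "2 * eps < \<bar>trace_dist_pure (P *\<^sub>v ket0 N) (Q *\<^sub>v ket0 N)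
                       - trace_dist_pure (P' *\<^sub>v ket0 N) (Q' *\<^sub>v ket0 N)\<bar>"
  shows "1/5 < vec_norm (final_state N alg P Q - final_state N alg P' Q')"
proof -
  define m where "m = 2 * N * anc_dim alg"
  define t where "t = trace_dist_pure (P *\<^sub>v ket0 N) (Q *\<^sub>v ket0 N)"
  define t' where "t' = trace_dist_pure (P' *\<^sub>v ket0 N) (Q' *\<^sub>v ket0 N)"
  define v where "v = final_state N alg P Q"
  define w where "w = final_state N alg P' Q'"
  have v: "dim_vec v = m" and w: "dim_vec w = m" and w_norm: "vec_norm w = 1"
    using final_state_carrier_norm[OF wf _ _ N] unitary unfolding v_def w_def m_def by auto
  define J where "J = {j. j < m \<and> \<bar>postproc alg j - t\<bar> \<le> eps}"
  define J' where "J' = {j. j < m \<and> \<bar>postproc alg j - t'\<bar> \<le> eps}"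
  have "prob_output N alg P Q (\<lambda>x. \<bar>x - t\<bar> \<le> eps) \<ge> 2/3"
    using est unitary(1,2) unfolding estimates_trace_distance_def t_def by blast
  then have "meas_prob v J \<ge> 2/3"
    unfolding prob_output_eq_meas_prob v_def[symmetric] v J_def .
  moreover have "prob_output N alg P' Q' (\<lambda>x. \<bar>x - t'\<bar> \<le> eps) \<ge> 2/3"
    using est unitary(3,4) unfolding estimates_trace_distance_def t'_def by blast
  then have "meas_prob w J' \<ge> 2/3"
    unfolding prob_output_eq_meas_prob w_def[symmetric] w J'_def .
  moreover have "meas_prob w J' + meas_prob w J \<le> 1"
  proof -
    have "J' \<inter> J = {}" using gap unfolding J_def J'_def t_def[symmetric] t'_def[symmetric] by auto
    then show ?thesis using meas_prob_disjoint_le[of J' w J] w w_norm by (auto simp: J_def J'_def)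
  qed
  ultimately show ?thesis
    unfolding v_def[symmetric] w_def[symmetric] using v w by (intro separated_outputs_far) (auto simp: J_def)
qed

section \<open>Plane rotations\<close>

definition plane_rotation :: "nat \<Rightarrow> real \<Rightarrow> real \<Rightarrow> complex mat" where
  "plane_rotation N a b = mat N N (\<lambda>(i, j).
     if i = 0 \<and> j = 0 then complex_of_real a else if i = 0 \<and> j = 1 then - complex_of_real b
     else if i = 1 \<and> j = 0 then complex_of_real b else if i = 1 \<and> j = 1 then complex_of_real a
     else if i = j then 1 else 0)"

lemma sum_lessThan_split_0_1:
  fixes f :: "nat \<Rightarrow> 'a :: comm_monoid_add"
  assumes "N \<ge> 2"
  shows "(\<Sum>i<N. f i) = f 0 + f 1 + (\<Sum>i\<in>{2..<N}. f i)"
proof -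
  have "{..<N} = {0, 1} \<union> {2..<N}" using assms by auto
  then show ?thesis by (simp add: sum.union_disjoint add.assoc)
qed

lemma plane_rotation_carrier: "plane_rotation N a b \<in> carrier_mat N N"
  unfolding plane_rotation_def by simp

lemma plane_rotation_mult_vec_nth:
  assumes N: "N \<ge> 2" and u: "u \<in> carrier_vec N" and i: "i < N"
  shows "(plane_rotation N a b *\<^sub>v u) $ i =
    (if i = 0 then of_real a * u $ 0 - of_real b * u $ 1
     else if i = 1 then of_real b * u $ 0 + of_real a * u $ 1 else u $ i)"
proof -
  let ?R = "plane_rotation N a b"
  have "(?R *\<^sub>v u) $ i = (\<Sum>j<N. ?R $$ (i, j) * u $ j)"
    using u i by (simp add: plane_rotation_def scalar_prod_def lessThan_atLeast0)
  also have "\<dots> = ?R $$ (i, 0) * u $ 0 + ?R $$ (i, 1) * u $ 1 + (\<Sum>j\<in>{2..<N}. ?R $$ (i, j) * u $ j)"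
    by (rule sum_lessThan_split_0_1[OF N])
  also have "(\<Sum>j\<in>{2..<N}. ?R $$ (i, j) * u $ j) = (\<Sum>j\<in>{2..<N}. if i = j then u $ j else 0)"
    using i by (intro sum.cong refl) (auto simp: plane_rotation_def)
  also have "\<dots> = (if i \<ge> 2 then u $ i else 0)" using i by (simp add: sum.delta)
  finally show ?thesis using i N by (auto simp: plane_rotation_def)
qed

lemma plane_rotation_mult:
  assumes N: "N \<ge> 2"
  shows "plane_rotation N a b * plane_rotation N a' b' = plane_rotation N (a * a' - b * b') (a * b' + b * a')"
proof (rule eq_matI)
  fix i j assume "i < dim_row (plane_rotation N (a * a' - b * b') (a * b' + b * a'))"
    and "j < dim_col (plane_rotation N (a * a' - b * b') (a * b' + b * a'))"
  then have i: "i < N" and j: "j < N" by (auto simp: plane_rotation_def)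
  have col: "col (plane_rotation N a' b') j \<in> carrier_vec N"
    by (rule carrier_vecI) (simp add: plane_rotation_def)
  have "(plane_rotation N a b * plane_rotation N a' b') $$ (i, j)
      = (plane_rotation N a b *\<^sub>v col (plane_rotation N a' b') j) $ i"
    using i j by (simp add: plane_rotation_def)
  also have "\<dots> = plane_rotation N (a * a' - b * b') (a * b' + b * a') $$ (i, j)"
    unfolding plane_rotation_mult_vec_nth[OF N col i] using i j N
    by (auto simp: plane_rotation_def algebra_simps)
  finally show "(plane_rotation N a b * plane_rotation N a' b') $$ (i, j)
      = plane_rotation N (a * a' - b * b') (a * b' + b * a') $$ (i, j)" .
qed (auto simp: plane_rotation_def)

lemma adj_plane_rotation: "adj (plane_rotation N a b) = plane_rotation N a (- b)"
  unfolding adj_def plane_rotation_def by (rule eq_matI) auto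

lemma plane_rotation_1_0: "plane_rotation N 1 0 = 1\<^sub>m N"
  unfolding plane_rotation_def by (rule eq_matI) auto

lemma is_unitary_plane_rotation:
  assumes "N \<ge> 2" and "a\<^sup>2 + b\<^sup>2 = 1"
  shows "is_unitary N (plane_rotation N a b)"
proof -
  have "a * a + b * b = 1" using assms(2) by (simp add: power2_eq_square)
  then show ?thesis
    unfolding is_unitary_def adj_plane_rotation using assms(1)
    by (simp add: plane_rotation_carrier plane_rotation_mult plane_rotation_1_0 mult.commute)
qed

lemma cmod_rotation_square:
  fixes p q :: real and x y :: complex
  shows "(cmod (of_real p * x - of_real q * y))\<^sup>2 + (cmod (of_real q * x + of_real p * y))\<^sup>2
       = (p\<^sup>2 + q\<^sup>2) * ((cmod x)\<^sup>2 + (cmod y)\<^sup>2)"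
  unfolding cmod_power2 by (simp add: algebra_simps power2_eq_square)

lemma le_one_of_power2_add_eq_one:
  fixes a b :: real
  assumes "a\<^sup>2 + b\<^sup>2 = 1"
  shows "a \<le> 1"
proof -
  have "a\<^sup>2 \<le> 1" using assms zero_le_power2[of b] by linarith
  then show ?thesis using power2_le_imp_le[of a 1] by simp
qed

lemma plane_rotation_dist_id:
  assumes N: "N \<ge> 2" and ab: "a\<^sup>2 + b\<^sup>2 = 1"
  shows "op_dist_le N (plane_rotation N a b) (1\<^sub>m N) (sqrt (2 - 2 * a))"
  unfolding op_dist_le_def
proof
  fix u :: "complex vec" assume u: "u \<in> carrier_vec N"
  have a_le: "0 \<le> 2 - 2 * a" using le_one_of_power2_add_eq_one[OF ab] by simp
  let ?d = "plane_rotation N a b *\<^sub>v u - u"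
  have d: "?d $ i = (if i = 0 then of_real (a - 1) * u $ 0 - of_real b * u $ 1
      else if i = 1 then of_real b * u $ 0 + of_real (a - 1) * u $ 1 else 0)" if "i < N" for i
    using plane_rotation_mult_vec_nth[OF N u that, of a b] that u by (simp add: algebra_simps)
  have "dim_vec ?d = N" using u by (simp add: plane_rotation_def)
  then have "(vec_norm ?d)\<^sup>2
      = (cmod (?d $ 0))\<^sup>2 + (cmod (?d $ 1))\<^sup>2 + (\<Sum>i\<in>{2..<N}. (cmod (?d $ i))\<^sup>2)"
    unfolding vec_norm_square by (rule ssubst) (rule sum_lessThan_split_0_1[OF N])
  also have "(\<Sum>i\<in>{2..<N}. (cmod (?d $ i))\<^sup>2) = 0" using d by simp
  also have "(cmod (?d $ 0))\<^sup>2 + (cmod (?d $ 1))\<^sup>2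
      = ((a - 1)\<^sup>2 + b\<^sup>2) * ((cmod (u $ 0))\<^sup>2 + (cmod (u $ 1))\<^sup>2)"
    using d[of 0] d[of 1] N cmod_rotation_square[of "a - 1" "u $ 0" b "u $ 1"] by simp
  also have "(a - 1)\<^sup>2 + b\<^sup>2 = 2 - 2 * a" using ab by (simp add: power2_eq_square algebra_simps)
  also have "(2 - 2 * a) * ((cmod (u $ 0))\<^sup>2 + (cmod (u $ 1))\<^sup>2) \<le> (2 - 2 * a) * (vec_norm u)\<^sup>2"
    using a_le u unfolding vec_norm_square
    by (intro mult_left_mono) (simp_all add: sum_lessThan_split_0_1[OF N] sum_nonneg)
  also have "\<dots> = (sqrt (2 - 2 * a) * vec_norm u)\<^sup>2"
    using a_le by (simp add: power_mult_distrib)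
  finally have "(vec_norm ?d)\<^sup>2 \<le> (sqrt (2 - 2 * a) * vec_norm u)\<^sup>2" by simp
  then have "vec_norm ?d \<le> sqrt (2 - 2 * a) * vec_norm u"
    by (rule power2_le_imp_le) (intro mult_nonneg_nonneg real_sqrt_ge_zero a_le vec_norm_nonneg)
  then show "vec_norm (plane_rotation N a b *\<^sub>v u - 1\<^sub>m N *\<^sub>v u) \<le> sqrt (2 - 2 * a) * vec_norm u"
    using u by simp
qed

lemma braket_ket0:
  assumes "v \<in> carrier_vec N" "N > 0"
  shows "braket (ket0 N) v = v $ 0"
proof -
  have "braket (ket0 N) v = (\<Sum>i<N. if i = 0 then v $ 0 else 0)"
    unfolding braket_def ket0_def using assms(1) by (intro sum.cong) auto
  then show ?thesis using assms(2) by simp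
qed

lemma trace_dist_pure_plane_rotation:
  assumes N: "N \<ge> 2" and ab: "a\<^sup>2 + b\<^sup>2 = 1"
  shows "trace_dist_pure (ket0 N) (plane_rotation N a b *\<^sub>v ket0 N) = \<bar>b\<bar>"
proof -
  have ket0: "ket0 N \<in> carrier_vec N" by (simp add: ket0_def)
  have "braket (ket0 N) (plane_rotation N a b *\<^sub>v ket0 N) = (plane_rotation N a b *\<^sub>v ket0 N) $ 0"
    using N by (intro braket_ket0 mult_mat_vec_carrier[OF plane_rotation_carrier ket0]) simp
  also have "\<dots> = of_real a"
    using plane_rotation_mult_vec_nth[OF N ket0, of 0] N by (simp add: ket0_def)
  finally show ?thesis
    using ab unfolding trace_dist_pure_def by (simp add: real_sqrt_abs flip: ab)
qed

lemma rotation_oracle_query_bound: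
  assumes N: "N \<ge> 2" and wf: "well_formed N alg" and est: "estimates_trace_distance N eps alg"
    and ab: "a\<^sup>2 + b\<^sup>2 = 1" and gap: "2 * eps < \<bar>b\<bar>"
  shows "1/5 < sqrt (2 - 2 * a) * num_queries alg"
proof -
  let ?I = "1\<^sub>m N :: complex mat" and ?R = "plane_rotation N a b"
  define K where "K = anc_dim alg"
  define \<delta> where "\<delta> = sqrt (2 - 2 * a)"
  have I: "is_unitary N ?I" by (rule is_unitary_one)
  have R: "is_unitary N ?R" using N ab by (rule is_unitary_plane_rotation)
  have ket0: "ket0 N \<in> carrier_vec N" by (simp add: ket0_def)
  have "trace_dist_pure (?I *\<^sub>v ket0 N) (?R *\<^sub>v ket0 N) = \<bar>b\<bar>"
    using trace_dist_pure_plane_rotation[OF N ab] ket0 by simp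
  moreover have "trace_dist_pure (?I *\<^sub>v ket0 N) (?I *\<^sub>v ket0 N) = 0"
    using trace_dist_pure_plane_rotation[OF N, of 1 0] ket0 by (simp add: plane_rotation_1_0)
  ultimately have "1/5 < vec_norm (final_state N alg ?I ?R - final_state N alg ?I ?I)"
    using N gap by (intro estimator_separates_final_states[OF _ wf est I R I I]) auto
  also have "\<dots> \<le> \<delta> * num_queries alg"
  proof -
    have K: "K \<ge> 1" and len: "length (unitaries alg) = length (queries alg) + 1"
      and As: "\<forall>A\<in>set (unitaries alg). is_unitary (2 * N * K) A"
      using wf unfolding well_formed_def K_def by auto
    have start: "ket0 (2 * N * K) \<in> carrier_vec (2 * N * K)" "vec_norm (ket0 (2 * N * K)) = 1"
      using N K by (simp_all add: ket0_def vec_norm_unit_vec)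
    have \<delta>: "0 \<le> \<delta>" using le_one_of_power2_add_eq_one[OF ab] by (simp add: \<delta>_def)
    have R_close: "op_dist_le N ?R ?I \<delta>" unfolding \<delta>_def using N ab by (rule plane_rotation_dist_id)
    show ?thesis
      using run_hybrid_dist[OF I I R I op_dist_le_refl[OF \<delta>] R_close \<delta> As len start(1) start(1)] start(2)
      unfolding final_state_def num_queries_def K_def by (simp add: vec_norm_diff_self)
  qed
  finally show ?thesis by (simp add: \<delta>_def)
qed

lemma rotation_defect_le:
  fixes s :: real
  assumes "0 \<le> s" "s \<le> 1"
  shows "sqrt (2 - 2 * sqrt (1 - s\<^sup>2)) \<le> 2 * s"
proof -
  have "0 \<le> 1 - s\<^sup>2" "1 - s\<^sup>2 \<le> 1" using assms by (auto simp: power_le_one)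
  then have "(1 - s\<^sup>2)\<^sup>2 \<le> 1 - s\<^sup>2" by (simp add: power2_eq_square mult_left_le_one_le)
  then have "1 - s\<^sup>2 \<le> sqrt (1 - s\<^sup>2)" by (rule real_le_rsqrt)
  then have "2 - 2 * sqrt (1 - s\<^sup>2) \<le> 4 * s\<^sup>2" using zero_le_power2[of s] by linarith
  also have "\<dots> = (2 * s)\<^sup>2" by (simp add: power_mult_distrib)
  finally show ?thesis using assms(1) by (intro real_le_lsqrt) simp_all
qed

theorem theorem5p2:
  "\<exists>c>0. \<forall>eps N alg. 0 < eps \<and> eps < 1/2 \<and> N \<ge> 2 \<and> well_formed N alg \<and>
      estimates_trace_distance N eps alg \<longrightarrow> real (num_queries alg) \<ge> c / eps"
proof (intro exI[of _ "1/30"] conjI allI impI)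
  show "(0::real) < 1/30" by simp
  fix eps N alg
  assume "0 < eps \<and> eps < 1/2 \<and> N \<ge> 2 \<and> well_formed N alg \<and> estimates_trace_distance N eps alg"
  then have eps: "0 < eps" "eps < 1/2" and N: "N \<ge> 2" and wf: "well_formed N alg"
    and est: "estimates_trace_distance N eps alg" by auto
  define s where "s = eps * (3 - 2 * eps)"
  have s: "0 \<le> s" "s \<le> 1" "2 * eps < s" "s \<le> 3 * eps"
  proof -
    have "0 < eps * (1 - 2 * eps)" "0 \<le> (1 - eps) * (1 - 2 * eps)" using eps by simp_all
    then show "0 \<le> s" "s \<le> 1" "2 * eps < s" "s \<le> 3 * eps"
      using eps unfolding s_def by (simp_all add: algebra_simps)
  qed
  have "1/5 < sqrt (2 - 2 * sqrt (1 - s\<^sup>2)) * num_queries alg"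
    using s by (intro rotation_oracle_query_bound[OF N wf est]) (auto simp: power_le_one)
  also have "\<dots> \<le> 6 * eps * num_queries alg"
    using rotation_defect_le[OF s(1,2)] s(4) by (intro mult_right_mono) auto
  finally show "1/30 / eps \<le> real (num_queries alg)" using eps by (simp add: field_simps)
qed

end
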